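(* In a search game (as defined in the context), represented via cell-units, let $B$ be a set of cell-units (possibly of various players), let $a\notin B$ be another cell-unit, and let $s^{1}$ be a cell-unit strategy profile under which every member of $B$ is best-responding. Then there exists a finite sequence of cell-unit improvements $s^{1},\ldots,s^{T}$ such that every member of $B\cup\{a\}$ is best-responding under $s^{T}$.
   Context: A search game has: a finite set of players $N$; a finite set $\Omega$ of locations; for each player $i$ a partition $\Pi_i$ of $\Omega$; a prior $\mu\in\Delta(\Omega)$ with $\mu(\pi_i)>0$ for all cells, and $\mu(\omega|\pi_i)=\mu(\omega)/\mu(\pi_i)$ for $\omega\in\pi_i$; capacities $K_i\in\mathbb{N}$; costs $c_i:\{0,\ldots,K_i\}\to\mathbb{R}_{\ge0}$ with $c_i(0)=0$ and nondecreasing increments $c_i(k+1)-c_i(k)\ge c_i(k)-c_i(k-1)$; rewards $v_i^m(\omega)\ge0$ with $v_i^{m+1}(\omega)\le v_i^m(\omega)$. A cell-unit of player $i$ is a pair $(\pi_i,j)$ with $\pi_i\in\Pi_i$ and $j\in\{1,\ldots,K_i\}$. A cell-unit strategy profile assigns to every cell-unit $(\pi_i,j)$ of every player either a location in $\pi_i$ or the symbol $\lambda$ ("inactive"), such that two distinct cell-units of the same cell are never assigned the same location. It induces the ordinary profile $s$ with $s_i(\pi_i)$ = set of locations assigned to the cell-units of $\pi_i$; let $m_s(\omega)$ be the number of players $i$ with $\omega\in s_i(\pi_i)$ for the cell $\pi_i\ni\omega$. The payoff of the cell $\pi_i$ (and of each of its cell-units) is $u_i(s|\pi_i)=\sum_{\omega\in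 s_i(\pi_i)}\mu(\omega|\pi_i)v_i^{m_s(\omega)}(\omega)-c_i(|s_i(\pi_i)|)$. A cell-unit is best-responding if no change of its own assignment alone (to another location of its cell not assigned to another cell-unit of the same cell, or to $\lambda$), holding all other assignments fixed, strictly increases the payoff of its cell. A sequence of cell-unit improvements is a sequence of cell-unit profiles in which each consecutive pair differs only in the assignment of a single cell-unit, and this change strictly increases the payoff of that cell-unit's cell. *)

theory Defs
  imports Complex_Main
begin

text \<open>Search games. Players: set N of type 'i; locations: set Om of type 'w;
  Pi i: partition of Om for player i; mu: prior; K i: capacity; c i k: cost;
  v i m w: reward v_i^m(w).\<close>

definition search_game ::
  "'i set \<Rightarrow> 'w set \<Rightarrow> ('i \<Rightarrow> 'w set set) \<Rightarrow> ('w \<Rightarrow> real) \<Rightarrow> ('i \<Rightarrow> nat)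
   \<Rightarrow> ('i \<Rightarrow> nat \<Rightarrow> real) \<Rightarrow> ('i \<Rightarrow> nat \<Rightarrow> 'w \<Rightarrow> real) \<Rightarrow> bool" where
  "search_game N Om Pi mu K c v \<longleftrightarrow>
     finite N \<and> finite Om \<and>
     (\<forall>i\<in>N. (\<forall>p\<in>Pi i. p \<noteq> {} \<and> p \<subseteq> Om) \<and> \<Union>(Pi i) = Om \<and>
               (\<forall>p\<in>Pi i. \<forall>q\<in>Pi i. p \<noteq> q \<longrightarrow> p \<inter> q = {})) \<and>
     (\<forall>w\<in>Om. mu w \<ge> 0) \<and> sum mu Om = 1 \<and>
     (\<forall>i\<in>N. \<forall>p\<in>Pi i. sum mu p > 0) \<and>
     (\<forall>i\<in>N. c i 0 = 0 \<and> (\<forall>k\<le>K i. c i k \<ge> 0) \<and>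
        (\<forall>k. 1 \<le> k \<and> k + 1 \<le> K i \<longrightarrow> c i (k + 1) - c i k \<ge> c i k - c i (k - 1))) \<and>
     (\<forall>i\<in>N. \<forall>m\<ge>1. \<forall>w\<in>Om. v i m w \<ge> 0 \<and> v i (Suc m) w \<le> v i m w)"

definition cell_units :: "'i set \<Rightarrow> ('i \<Rightarrow> 'w set set) \<Rightarrow> ('i \<Rightarrow> nat) \<Rightarrow> ('i \<times> 'w set \<times> nat) set" where
  "cell_units N Pi K = {(i, p, j). i \<in> N \<and> p \<in> Pi i \<and> j \<in> {1..K i}}"

text \<open>A cell-unit strategy profile: sigma i p j = Some w (location w) or None (inactive, lambda).
  Outside of cell-units the value is fixed to None so that profiles are canonical.\<close>
type_synonym ('i, 'w) cu_profile = "'i \<Rightarrow> 'w set \<Rightarrow> nat \<Rightarrow> 'w option"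

definition cu_profile :: "'i set \<Rightarrow> ('i \<Rightarrow> 'w set set) \<Rightarrow> ('i \<Rightarrow> nat) \<Rightarrow> ('i, 'w) cu_profile \<Rightarrow> bool" where
  "cu_profile N Pi K s \<longleftrightarrow>
     (\<forall>i p j. (i, p, j) \<notin> cell_units N Pi K \<longrightarrow> s i p j = None) \<and>
     (\<forall>i p j w. (i, p, j) \<in> cell_units N Pi K \<and> s i p j = Some w \<longrightarrow> w \<in> p) \<and>
     (\<forall>i p j j'. (i, p, j) \<in> cell_units N Pi K \<and> (i, p, j') \<in> cell_units N Pi K \<and> j \<noteq> j'
        \<and> s i p j \<noteq> None \<longrightarrow> s i p j \<noteq> s i p j')"

definition induced :: "('i \<Rightarrow> nat) \<Rightarrow> ('i, 'w) cu_profile \<Rightarrow> 'i \<Rightarrow> 'w set \<Rightarrow> 'w set" where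
  "induced K s i p = {w. \<exists>j\<in>{1..K i}. s i p j = Some w}"

definition searchers :: "'i set \<Rightarrow> ('i \<Rightarrow> 'w set set) \<Rightarrow> ('i \<Rightarrow> nat) \<Rightarrow> ('i, 'w) cu_profile \<Rightarrow> 'w \<Rightarrow> nat" where
  "searchers N Pi K s w = card {i \<in> N. \<exists>p\<in>Pi i. w \<in> p \<and> w \<in> induced K s i p}"

definition cell_payoff ::
  "'i set \<Rightarrow> ('i \<Rightarrow> 'w set set) \<Rightarrow> ('w \<Rightarrow> real) \<Rightarrow> ('i \<Rightarrow> nat)
   \<Rightarrow> ('i \<Rightarrow> nat \<Rightarrow> real) \<Rightarrow> ('i \<Rightarrow> nat \<Rightarrow> 'w \<Rightarrow> real) \<Rightarrow> ('i, 'w) cu_profile \<Rightarrow> 'i \<Rightarrow> 'w set \<Rightarrow> real" where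
  "cell_payoff N Pi mu K c v s i p =
     (\<Sum>w\<in>induced K s i p. (mu w / sum mu p) * v i (searchers N Pi K s w) w)
     - c i (card (induced K s i p))"

definition admissible :: "('i \<Rightarrow> nat) \<Rightarrow> ('i, 'w) cu_profile \<Rightarrow> 'i \<Rightarrow> 'w set \<Rightarrow> nat \<Rightarrow> 'w option \<Rightarrow> bool" where
  "admissible K s i p j x \<longleftrightarrow>
     x = None \<or> (\<exists>w\<in>p. x = Some w \<and> (\<forall>j'\<in>{1..K i}. j' \<noteq> j \<longrightarrow> s i p j' \<noteq> Some w))"

definition upd_cu :: "('i, 'w) cu_profile \<Rightarrow> 'i \<Rightarrow> 'w set \<Rightarrow> nat \<Rightarrow> 'w option \<Rightarrow> ('i, 'w) cu_profile" where
  "upd_cu s i p j x = s(i := (s i)(p := (s i p)(j := x)))"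

definition best_responding ::
  "'i set \<Rightarrow> ('i \<Rightarrow> 'w set set) \<Rightarrow> ('w \<Rightarrow> real) \<Rightarrow> ('i \<Rightarrow> nat)
   \<Rightarrow> ('i \<Rightarrow> nat \<Rightarrow> real) \<Rightarrow> ('i \<Rightarrow> nat \<Rightarrow> 'w \<Rightarrow> real) \<Rightarrow> ('i, 'w) cu_profile
   \<Rightarrow> ('i \<times> 'w set \<times> nat) \<Rightarrow> bool" where
  "best_responding N Pi mu K c v s u \<longleftrightarrow>
     (case u of (i, p, j) \<Rightarrow>
        \<forall>x. admissible K s i p j x \<longrightarrow>
            \<not> (cell_payoff N Pi mu K c v (upd_cu s i p j x) i p > cell_payoff N Pi mu K c v s i p))"

definition cu_improvement ::
  "'i set \<Rightarrow> ('i \<Rightarrow> 'w set set) \<Rightarrow> ('w \<Rightarrow> real) \<Rightarrow> ('i \<Rightarrow> nat)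
   \<Rightarrow> ('i \<Rightarrow> nat \<Rightarrow> real) \<Rightarrow> ('i \<Rightarrow> nat \<Rightarrow> 'w \<Rightarrow> real) \<Rightarrow> ('i, 'w) cu_profile
   \<Rightarrow> ('i, 'w) cu_profile \<Rightarrow> bool" where
  "cu_improvement N Pi mu K c v s s' \<longleftrightarrow>
     (\<exists>i p j x. (i, p, j) \<in> cell_units N Pi K \<and> admissible K s i p j x \<and>
        s' = upd_cu s i p j x \<and>
        cell_payoff N Pi mu K c v s' i p > cell_payoff N Pi mu K c v s i p)"

end

theory Submission
  imports Defs
begin

text \<open>
  The cell-units form a singleton congestion game with cell-specific payoffs. A unit occupies a
  slot: a location of its cell or, when inactive, the idle slot of its cell. Changing the slot of
  one unit changes the payoff of its cell by F(new slot, load + 1) - F(old slot, load), where the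
  load of a location is its number of searchers and the load of an idle slot is the number of idle
  units of its cell; F is nonincreasing in the load because rewards decrease with the number of
  searchers and costs are convex.

  The lemma then follows Milchtaich's argument for such games. Let a switch to a best deviation.
  From then on the loads differ from those of s1 by one extra unit on a tail slot T and one missing
  unit on a head slot H, and every unit stays satisfied: at the loads of s1 it would not want to
  switch. While some unit on T would rather join another slot, it switches to a best deviation;
  this moves T and lowers a potential built from the ranks of the values W of joining slots at the
  loads of s1. Otherwise every unit that can improve wants to join H, and the least-paid unit of
  its cell does so; this moves H and lowers the analogous potential for the values V of slots at
  the loads of s1. Once T = H the loads are those of s1, where satisfied units best-respond.
\<close>

definition value_rank :: "('r \<Rightarrow> real) \<Rightarrow> 'r set \<Rightarrow> 'r \<Rightarrow> nat" where
  "value_rank f A r = card {x \<in> A. f r < f x}"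

lemma value_rank_less:
  assumes "finite A" "y \<in> A" "f x < f y"
  shows "value_rank f A y < value_rank f A x"
  unfolding value_rank_def using assms by (intro psubset_card_mono) auto

lemma card_eq_card_Diff_singleton_plus:
  "finite A \<Longrightarrow> card A = card (A - {x}) + of_bool (x \<in> A)"
  using card_Suc_Diff1[of A x] by (cases "x \<in> A") auto

section \<open>Singleton congestion games with cell-specific payoffs\<close>

text \<open>
  opts s u are the resources u may switch to. Units of one cell may block each other's resources,
  whence opts_move_same_cell and opts_sibling; load_move is stated additively to avoid truncated
  subtraction.
\<close>

locale unit_congestion_game =
  fixes U :: "'u set" and cell :: "'u \<Rightarrow> 'c" and R :: "'c \<Rightarrow> 'r set"
    and valid :: "'s \<Rightarrow> bool" and pos :: "'s \<Rightarrow> 'u \<Rightarrow> 'r" and load :: "'s \<Rightarrow> 'r \<Rightarrow> nat"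
    and F :: "'c \<Rightarrow> 'r \<Rightarrow> nat \<Rightarrow> real"
    and opts :: "'s \<Rightarrow> 'u \<Rightarrow> 'r set" and move :: "'s \<Rightarrow> 'u \<Rightarrow> 'r \<Rightarrow> 's"
    and improves :: "'s \<Rightarrow> 's \<Rightarrow> bool" and br :: "'s \<Rightarrow> 'u \<Rightarrow> bool"
  assumes finite_units: "finite U"
    and finite_resources: "u \<in> U \<Longrightarrow> finite (R (cell u))"
    and pos_in_resources: "valid s \<Longrightarrow> u \<in> U \<Longrightarrow> pos s u \<in> R (cell u)"
    and opts_subset_resources: "valid s \<Longrightarrow> u \<in> U \<Longrightarrow> opts s u \<subseteq> R (cell u)"
    and pos_notin_opts: "valid s \<Longrightarrow> u \<in> U \<Longrightarrow> pos s u \<notin> opts s u"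
    and load_pos_pos: "valid s \<Longrightarrow> u \<in> U \<Longrightarrow> 0 < load s (pos s u)"
    and F_antimono: "u \<in> U \<Longrightarrow> r \<in> R (cell u) \<Longrightarrow> 0 < n \<Longrightarrow> n \<le> m \<Longrightarrow>
        F (cell u) r m \<le> F (cell u) r n"
    and br_iff: "valid s \<Longrightarrow> u \<in> U \<Longrightarrow> br s u \<longleftrightarrow>
        (\<forall>q\<in>opts s u. F (cell u) q (Suc (load s q)) \<le> F (cell u) (pos s u) (load s (pos s u)))"
    and valid_move: "valid s \<Longrightarrow> u \<in> U \<Longrightarrow> q \<in> opts s u \<Longrightarrow> valid (move s u q)"
    and improves_move: "valid s \<Longrightarrow> u \<in> U \<Longrightarrow> q \<in> opts s u \<Longrightarrow>
        F (cell u) (pos s u) (load s (pos s u)) < F (cell u) q (Suc (load s q)) \<Longrightarrow>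
        improves s (move s u q)"
    and pos_move: "valid s \<Longrightarrow> u \<in> U \<Longrightarrow> q \<in> opts s u \<Longrightarrow> v \<in> U \<Longrightarrow>
        pos (move s u q) v = (if v = u then q else pos s v)"
    and load_move: "valid s \<Longrightarrow> u \<in> U \<Longrightarrow> q \<in> opts s u \<Longrightarrow>
        load (move s u q) r + of_bool (r = pos s u) = load s r + of_bool (r = q)"
    and opts_move_other_cell: "valid s \<Longrightarrow> u \<in> U \<Longrightarrow> q \<in> opts s u \<Longrightarrow> v \<in> U \<Longrightarrow>
        cell v \<noteq> cell u \<Longrightarrow> opts (move s u q) v = opts s v"
    and opts_move_same_cell: "valid s \<Longrightarrow> u \<in> U \<Longrightarrow> q \<in> opts s u \<Longrightarrow> v \<in> U \<Longrightarrow>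
        cell v = cell u \<Longrightarrow> opts (move s u q) v \<subseteq> insert (pos s u) (opts s v)"
    and opts_sibling: "valid s \<Longrightarrow> u \<in> U \<Longrightarrow> v \<in> U \<Longrightarrow> v \<noteq> u \<Longrightarrow> cell v = cell u \<Longrightarrow>
        q \<in> opts s u \<Longrightarrow> q \<in> opts s v \<or> q = pos s v"
begin

definition pay :: "'s \<Rightarrow> 'u \<Rightarrow> real" where
  "pay s u = F (cell u) (pos s u) (load s (pos s u))"

definition dev :: "'s \<Rightarrow> 'u \<Rightarrow> 'r \<Rightarrow> real" where
  "dev s u q = F (cell u) q (Suc (load s q))"

lemma br_iff_dev: "valid s \<Longrightarrow> u \<in> U \<Longrightarrow> br s u \<longleftrightarrow> (\<forall>q\<in>opts s u. dev s u q \<le> pay s u)"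
  using br_iff by (simp add: pay_def dev_def)

lemma improves_move_dev:
  "valid s \<Longrightarrow> u \<in> U \<Longrightarrow> q \<in> opts s u \<Longrightarrow> pay s u < dev s u q \<Longrightarrow> improves s (move s u q)"
  using improves_move by (simp add: pay_def dev_def)

lemma best_deviation:
  assumes "valid s" "u \<in> U" "\<not> br s u"
  obtains b where "b \<in> opts s u" "pay s u < dev s u b" "\<forall>q\<in>opts s u. dev s u q \<le> dev s u b"
proof -
  have "\<not> (\<forall>q\<in>opts s u. dev s u q \<le> pay s u)"
    using br_iff_dev[OF assms(1,2)] assms(3) by simp
  then obtain q where q: "q \<in> opts s u" "pay s u < dev s u q"
    by (auto simp: not_le)
  have fin: "finite (opts s u)"
    using finite_subset[OF opts_subset_resources finite_resources] assms(1,2) by blast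
  then obtain b where b: "b \<in> opts s u" "Max (dev s u ` opts s u) = dev s u b"
    using obtains_MAX[OF fin] q(1) by blast
  have "\<forall>q\<in>opts s u. dev s u q \<le> dev s u b"
    using fin b(2) Max_ge by (metis finite_imageI imageI)
  with b(1) q show thesis
    using that by force
qed

end

section \<open>Best-reply paths after one unit deviates\<close>

locale unit_congestion_game_from = unit_congestion_game +
  fixes s1 and M
  assumes valid_s1: "valid s1" and M_subset: "M \<subseteq> U"
begin

abbreviation L0 where "L0 \<equiv> load s1"

text \<open>
  M is the set of units that have to best-respond in the end. V C r and W C r are the values of r
  to a unit of cell C at its load in s1 and after one more unit joins it.
\<close>

definition V where "V C r = F C r (L0 r)"

definition W where "W C r = F C r (Suc (L0 r))"

definition satisfied where
  "satisfied s u \<longleftrightarrow> L0 (pos s u) = 0 \<or> (\<forall>q\<in>opts s u. W (cell u) q \<le> V (cell u) (pos s u))"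

definition tail_stable where
  "tail_stable s u \<longleftrightarrow> (\<forall>q\<in>opts s u. W (cell u) q \<le> W (cell u) (pos s u))"

definition shifted where
  "shifted s T H \<longleftrightarrow> (\<forall>r. load s r + of_bool (r = H) = L0 r + of_bool (r = T))"

definition invariant where
  "invariant s T H \<longleftrightarrow> valid s \<and> shifted s T H \<and> (\<forall>u\<in>M. satisfied s u)"

definition settles where
  "settles s \<longleftrightarrow> (\<exists>s'. improves\<^sup>*\<^sup>* s s' \<and> (\<forall>u\<in>M. br s' u))"

definition rank_sum where
  "rank_sum f s = (\<Sum>u\<in>M. value_rank (f (cell u)) (R (cell u)) (pos s u))"

lemma settles_step: "improves s s' \<Longrightarrow> settles s' \<Longrightarrow> settles s"
  unfolding settles_def by (meson converse_rtranclp_into_rtranclp)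

lemma settles_if_best_responding: "\<forall>u\<in>M. br s u \<Longrightarrow> settles s"
  unfolding settles_def by blast

lemma W_le_V: "u \<in> U \<Longrightarrow> r \<in> R (cell u) \<Longrightarrow> 0 < L0 r \<Longrightarrow> W (cell u) r \<le> V (cell u) r"
  unfolding W_def V_def by (rule F_antimono) auto

lemma rank_sum_move_less:
  assumes "valid s" "u \<in> M" "q \<in> opts s u" "f (cell u) (pos s u) < f (cell u) q"
  shows "rank_sum f (move s u q) < rank_sum f s"
proof -
  let ?rk = "\<lambda>s w. value_rank (f (cell w)) (R (cell w)) (pos s w)"
  have u: "u \<in> U"
    using assms(2) M_subset by blast
  have fin: "finite M"
    using finite_subset[OF M_subset finite_units] .
  have q: "q \<in> R (cell u)"
    using opts_subset_resources[OF assms(1) u] assms(3) by blast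
  have others: "(\<Sum>w\<in>M - {u}. ?rk (move s u q) w) = (\<Sum>w\<in>M - {u}. ?rk s w)"
    using pos_move[OF assms(1) u assms(3)] M_subset by (intro sum.cong) auto
  have "?rk (move s u q) u < ?rk s u"
    using pos_move[OF assms(1) u assms(3) u] value_rank_less[OF finite_resources[OF u] q assms(4)]
    by simp
  then show ?thesis
    unfolding rank_sum_def sum.remove[OF fin assms(2)] others by simp
qed

lemma shifted_load:
  assumes "shifted s T H" "T \<noteq> H"
  shows shifted_load_tail: "load s T = Suc (L0 T)"
    and shifted_load_head: "Suc (load s H) = L0 H"
    and shifted_load_other: "r \<noteq> T \<Longrightarrow> r \<noteq> H \<Longrightarrow> load s r = L0 r"
  using assms unfolding shifted_def
  by (metis add.commute add_cancel_right_right of_bool_eq plus_1_eq_Suc)+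

lemma shifted_balanced: "shifted s T T \<Longrightarrow> load s r = L0 r"
  unfolding shifted_def by (metis add_right_cancel)

lemma shifted_initial: "shifted s1 r r"
  unfolding shifted_def by simp

lemma shifted_move_from_tail:
  assumes "valid s" "u \<in> U" "q \<in> opts s u" "shifted s T H" "pos s u = T"
  shows "shifted (move s u q) q H"
  unfolding shifted_def
proof
  fix r
  have "load (move s u q) r + of_bool (r = T) = load s r + of_bool (r = q)"
    using load_move[OF assms(1-3)] assms(5) by simp
  moreover have "load s r + of_bool (r = H) = L0 r + of_bool (r = T)"
    using assms(4) unfolding shifted_def by blast
  ultimately show "load (move s u q) r + of_bool (r = H) = L0 r + of_bool (r = q)"
    by linarith
qed

lemma shifted_move_to_head:
  assumes "valid s" "u \<in> U" "H \<in> opts s u" "shifted s T H"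
  shows "shifted (move s u H) T (pos s u)"
  unfolding shifted_def
proof
  fix r
  have "load (move s u H) r + of_bool (r = pos s u) = load s r + of_bool (r = H)"
    using load_move[OF assms(1-3)] .
  also have "\<dots> = L0 r + of_bool (r = T)"
    using assms(4) unfolding shifted_def by blast
  finally show "load (move s u H) r + of_bool (r = pos s u) = L0 r + of_bool (r = T)" .
qed

context
  fixes s T H u
  assumes valid: "valid s" and shifted: "shifted s T H" and TH: "T \<noteq> H" and u: "u \<in> U"
begin

lemma L0_head_pos: "0 < L0 H"
  using shifted_load_head[OF shifted TH] by linarith

lemma L0_pos_pos: "pos s u \<noteq> T \<Longrightarrow> 0 < L0 (pos s u)"
  using load_pos_pos[OF valid u] shifted_load_other[OF shifted TH] L0_head_pos
  by (cases "pos s u = H") auto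

lemma dev_le_W: "q \<in> R (cell u) \<Longrightarrow> q \<noteq> H \<Longrightarrow> dev s u q \<le> W (cell u) q"
  unfolding dev_def W_def
  using shifted_load_tail[OF shifted TH] shifted_load_other[OF shifted TH]
  by (cases "q = T") (auto intro: F_antimono[OF u])

lemma dev_head: "dev s u H = V (cell u) H"
  unfolding dev_def V_def using shifted_load_head[OF shifted TH] by simp

lemma W_le_dev: "q \<in> R (cell u) \<Longrightarrow> q \<noteq> T \<Longrightarrow> W (cell u) q \<le> dev s u q"
  using W_le_V[OF u _ L0_head_pos] dev_head shifted_load_other[OF shifted TH]
  by (cases "q = H") (auto simp: dev_def W_def)

lemma dev_le_V: "q \<in> R (cell u) \<Longrightarrow> q \<noteq> T \<Longrightarrow> 0 < L0 q \<Longrightarrow> dev s u q \<le> V (cell u) q"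
  using dev_head dev_le_W W_le_V[OF u] by (cases "q = H") (auto intro: order.trans)

lemma pay_tail: "pos s u = T \<Longrightarrow> pay s u = W (cell u) T"
  unfolding pay_def W_def using shifted_load_tail[OF shifted TH] by simp

lemma pay_head: "pos s u = H \<Longrightarrow> V (cell u) H \<le> pay s u"
  unfolding pay_def V_def using shifted_load_head[OF shifted TH] load_pos_pos[OF valid u]
  by (auto intro: F_antimono[OF u pos_in_resources[OF valid u]])

lemma pay_other: "pos s u \<noteq> T \<Longrightarrow> pos s u \<noteq> H \<Longrightarrow> pay s u = V (cell u) (pos s u)"
  unfolding pay_def V_def using shifted_load_other[OF shifted TH] by simp

lemma pay_le_V: "pos s u \<noteq> H \<Longrightarrow> 0 < L0 (pos s u) \<Longrightarrow> pay s u \<le> V (cell u) (pos s u)"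
  using pay_tail pay_other W_le_V[OF u pos_in_resources[OF valid u]] by (cases "pos s u = T") auto

end

lemma satisfied_if_br: "u \<in> M \<Longrightarrow> br s1 u \<Longrightarrow> satisfied s1 u"
  using br_iff_dev[OF valid_s1] M_subset unfolding satisfied_def pay_def dev_def V_def W_def by auto

lemma balanced_br:
  assumes "invariant s T T" "u \<in> M"
  shows "br s u"
proof -
  have s: "valid s" and u: "u \<in> U" and sat: "satisfied s u"
    using assms M_subset unfolding invariant_def by auto
  have load: "load s = L0"
    using assms(1) shifted_balanced unfolding invariant_def by blast
  have "0 < L0 (pos s u)"
    using load_pos_pos[OF s u] load by simp
  then show ?thesis
    using sat load unfolding br_iff_dev[OF s u] satisfied_def pay_def dev_def V_def W_def by simp
qed

lemma settles_if_balanced: "invariant s T T \<Longrightarrow> settles s"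
  using balanced_br settles_if_best_responding by blast

lemma sibling_bound:
  assumes "valid s" "w \<in> M" "satisfied s w" "u \<in> U" "w \<noteq> u" "cell w = cell u"
    and "q \<in> opts s u" "0 < L0 (pos s w)"
  shows "W (cell u) q \<le> V (cell u) (pos s w)"
proof -
  have w: "w \<in> U"
    using assms(2) M_subset by blast
  have "q \<in> opts s w \<or> q = pos s w"
    using opts_sibling[OF assms(1,4) w assms(5,6,7)] .
  then show ?thesis
  proof
    assume "q \<in> opts s w"
    then show ?thesis
      using assms(3,6,8) unfolding satisfied_def by auto
  next
    assume "q = pos s w"
    then show ?thesis
      using W_le_V[OF assms(4)] opts_subset_resources[OF assms(1,4)] assms(7,8) by auto
  qed
qed

lemma satisfied_move:
  assumes valid: "valid s" and u: "u \<in> M" and q: "q \<in> opts s u"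
    and others: "\<forall>w\<in>M - {u}. satisfied s w"
    and self: "0 < L0 q \<Longrightarrow> \<forall>q'\<in>insert (pos s u) (opts s u - {q}). W (cell u) q' \<le> V (cell u) q"
    and siblings: "\<And>w. w \<in> M \<Longrightarrow> w \<noteq> u \<Longrightarrow> cell w = cell u \<Longrightarrow> 0 < L0 (pos s w) \<Longrightarrow>
        W (cell u) (pos s u) \<le> V (cell u) (pos s w)"
  shows "\<forall>w\<in>M. satisfied (move s u q) w"
proof
  fix w
  assume w: "w \<in> M"
  have uU: "u \<in> U" and wU: "w \<in> U"
    using u w M_subset by auto
  show "satisfied (move s u q) w"
  proof (cases "w = u")
    case True
    have "opts (move s u q) u \<subseteq> insert (pos s u) (opts s u - {q})"
      using opts_move_same_cell[OF valid uU q uU] pos_notin_opts[OF valid_move[OF valid uU q] uU]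
        pos_move[OF valid uU q uU] by auto
    then show ?thesis
      using self pos_move[OF valid uU q uU] True unfolding satisfied_def by auto
  next
    case False
    have pos: "pos (move s u q) w = pos s w"
      using pos_move[OF valid uU q wU] False by simp
    have sat: "satisfied s w"
      using others w False by blast
    show ?thesis
    proof (cases "cell w = cell u")
      case True
      then show ?thesis
        using opts_move_same_cell[OF valid uU q wU] sat siblings[OF w False] pos
        unfolding satisfied_def by fastforce
    next
      case False
      then show ?thesis
        using opts_move_other_cell[OF valid uU q wU] sat pos unfolding satisfied_def by simp
    qed
  qed
qed

lemma tail_stable_move:
  assumes valid: "valid s" and u: "u \<in> U" and q: "q \<in> opts s u"
    and w: "w \<in> U" "w \<noteq> u" "tail_stable s w"
    and sibling: "cell w = cell u \<Longrightarrow> W (cell u) (pos s u) \<le> W (cell u) (pos s w)"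
  shows "tail_stable (move s u q) w"
proof -
  have pos: "pos (move s u q) w = pos s w"
    using pos_move[OF valid u q w(1)] w(2) by simp
  show ?thesis
  proof (cases "cell w = cell u")
    case True
    then show ?thesis
      using opts_move_same_cell[OF valid u q w(1)] w(3) sibling pos
      unfolding tail_stable_def by fastforce
  next
    case False
    then show ?thesis
      using opts_move_other_cell[OF valid u q w(1)] w(3) pos unfolding tail_stable_def by simp
  qed
qed

lemma best_deviation_satisfied:
  assumes valid: "valid s" and u: "u \<in> M" and others: "\<forall>w\<in>M - {u}. satisfied s w"
    and b: "b \<in> opts s u" "pay s u < dev s u b" "\<forall>x\<in>opts s u. dev s u x \<le> dev s u b"
    and W_dev: "\<forall>x\<in>opts s u. W (cell u) x \<le> dev s u x" and W_pay: "W (cell u) (pos s u) \<le> pay s u"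
    and dev_V: "0 < L0 b \<Longrightarrow> dev s u b \<le> V (cell u) b"
    and q: "q \<in> opts s u" "W (cell u) (pos s u) \<le> W (cell u) q"
  shows "\<forall>w\<in>M. satisfied (move s u b) w"
proof (rule satisfied_move[OF valid u b(1) others])
  have W_le_dev_b: "W (cell u) x \<le> dev s u b" if "x \<in> insert (pos s u) (opts s u)" for x
    using that
  proof
    assume "x = pos s u"
    then show ?thesis
      using W_pay b(2) by simp
  next
    assume "x \<in> opts s u"
    then show ?thesis
      using W_dev b(3) order.trans by blast
  qed
  assume "0 < L0 b"
  then show "\<forall>x\<in>insert (pos s u) (opts s u - {b}). W (cell u) x \<le> V (cell u) b"
    using W_le_dev_b dev_V order.trans by blast
next
  fix w
  assume w: "w \<in> M" "w \<noteq> u" "cell w = cell u" "0 < L0 (pos s w)"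
  have "W (cell u) q \<le> V (cell u) (pos s w)"
    using sibling_bound[OF valid w(1) _ _ w(2,3) q(1) w(4)] others w(1,2) u M_subset by blast
  then show "W (cell u) (pos s u) \<le> V (cell u) (pos s w)"
    using q(2) by simp
qed

lemma tail_step:
  assumes inv: "invariant s T H" and TH: "T \<noteq> H"
    and u: "u \<in> M" "pos s u = T" "\<not> tail_stable s u"
  obtains s' T' where "improves s s'" "invariant s' T' H" "T' \<noteq> H \<Longrightarrow> rank_sum W s' < rank_sum W s"
proof -
  have valid: "valid s" and shifted: "shifted s T H" and sat: "\<forall>w\<in>M. satisfied s w"
    using inv unfolding invariant_def by auto
  have uU: "u \<in> U"
    using u(1) M_subset by blast
  note opts_R = opts_subset_resources[OF valid uU]
  obtain q where q: "q \<in> opts s u" "W (cell u) T < W (cell u) q"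
    using u(2,3) unfolding tail_stable_def by (auto simp: not_le)
  have W_dev: "\<forall>x\<in>opts s u. W (cell u) x \<le> dev s u x"
    using W_le_dev[OF valid shifted TH uU] opts_R pos_notin_opts[OF valid uU] u(2) by auto
  have pay: "pay s u = W (cell u) T"
    using pay_tail[OF valid shifted TH uU u(2)] .
  then have "\<not> br s u"
    using br_iff_dev[OF valid uU] q W_dev by fastforce
  then obtain b where b: "b \<in> opts s u" "pay s u < dev s u b" "\<forall>x\<in>opts s u. dev s u x \<le> dev s u b"
    using best_deviation[OF valid uU] by blast
  have bT: "b \<noteq> T"
    using pos_notin_opts[OF valid uU] b(1) u(2) by auto
  have "\<forall>w\<in>M. satisfied (move s u b) w"
  proof (rule best_deviation_satisfied[OF valid u(1) _ b W_dev _ _ q(1)])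
    show "\<forall>w\<in>M - {u}. satisfied s w"
      using sat by blast
    show "W (cell u) (pos s u) \<le> pay s u" "W (cell u) (pos s u) \<le> W (cell u) q"
      using pay u(2) q(2) by simp_all
    show "0 < L0 b \<Longrightarrow> dev s u b \<le> V (cell u) b"
      using dev_le_V[OF valid shifted TH uU _ bT] opts_R b(1) by blast
  qed
  moreover have "shifted (move s u b) b H"
    using shifted_move_from_tail[OF valid uU b(1) shifted u(2)] .
  moreover have "rank_sum W (move s u b) < rank_sum W s" if "b \<noteq> H"
  proof -
    have "dev s u b \<le> W (cell u) b"
      using dev_le_W[OF valid shifted TH uU _ that] opts_R b(1) by blast
    then have "W (cell u) (pos s u) < W (cell u) b"
      using b(2) pay u(2) by simp
    then show ?thesis
      by (rule rank_sum_move_less[OF valid u(1) b(1)])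
  qed
  ultimately show thesis
    using that[of "move s u b" b] improves_move_dev[OF valid uU b(1,2)] valid_move[OF valid uU b(1)]
    unfolding invariant_def by blast
qed

lemma W_le_pay:
  assumes inv: "invariant s T H" and TH: "T \<noteq> H" and u: "u \<in> M" "pos s u \<noteq> H"
    and stable: "pos s u = T \<Longrightarrow> tail_stable s u"
  shows "\<forall>q\<in>insert (pos s u) (opts s u). W (cell u) q \<le> pay s u"
proof -
  have valid: "valid s" and shifted: "shifted s T H" and sat: "satisfied s u"
    using inv u(1) unfolding invariant_def by auto
  have uU: "u \<in> U"
    using u(1) M_subset by blast
  show ?thesis
  proof (cases "pos s u = T")
    case True
    then show ?thesis
      using stable pay_tail[OF valid shifted TH uU] unfolding tail_stable_def by auto
  next
    case False
    have "0 < L0 (pos s u)"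
      using L0_pos_pos[OF valid shifted TH uU False] .
    then show ?thesis
      using sat pay_other[OF valid shifted TH uU False u(2)]
        W_le_V[OF uU pos_in_resources[OF valid uU]]
      unfolding satisfied_def by auto
  qed
qed

lemma improvement_only_to_head:
  assumes inv: "invariant s T H" and TH: "T \<noteq> H"
    and stable: "\<forall>w\<in>M. pos s w = T \<longrightarrow> tail_stable s w"
    and u: "u \<in> M" "\<not> br s u"
  shows "pos s u \<noteq> H" "H \<in> opts s u" "pay s u < V (cell u) H"
proof -
  have valid: "valid s" and shifted: "shifted s T H" and sat: "satisfied s u"
    using inv u(1) unfolding invariant_def by auto
  have uU: "u \<in> U"
    using u(1) M_subset by blast
  obtain q where q: "q \<in> opts s u" "pay s u < dev s u q"
    using u(2) br_iff_dev[OF valid uU] by (auto simp: not_le)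
  have qR: "q \<in> R (cell u)"
    using opts_subset_resources[OF valid uU] q(1) by blast
  show pos: "pos s u \<noteq> H"
  proof
    assume pos: "pos s u = H"
    then have "dev s u q \<le> W (cell u) q"
      using dev_le_W[OF valid shifted TH uU qR] pos_notin_opts[OF valid uU] q(1) by auto
    also have "\<dots> \<le> V (cell u) H"
      using sat q(1) pos L0_head_pos[OF valid shifted TH uU] unfolding satisfied_def by auto
    also have "\<dots> \<le> pay s u"
      using pay_head[OF valid shifted TH uU pos] .
    finally show False
      using q(2) by simp
  qed
  have "q = H"
  proof (rule ccontr)
    assume "q \<noteq> H"
    then have "dev s u q \<le> W (cell u) q"
      using dev_le_W[OF valid shifted TH uU qR] by blast
    also have "\<dots> \<le> pay s u"
      using W_le_pay[OF inv TH u(1) pos] stable u(1) q(1) by blast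
    finally show False
      using q(2) by simp
  qed
  then show "H \<in> opts s u" "pay s u < V (cell u) H"
    using q dev_head[OF valid shifted TH uU] by auto
qed

text \<open>Moving the least-paid sibling to H keeps every sibling satisfied and tail-stable.\<close>

lemma least_paid_sibling:
  assumes inv: "invariant s T H" and TH: "T \<noteq> H"
    and stable: "\<forall>w\<in>M. pos s w = T \<longrightarrow> tail_stable s w"
    and u: "u \<in> M" "\<not> br s u"
  obtains v where "v \<in> M" "pos s v \<noteq> H" "H \<in> opts s v" "pay s v < V (cell v) H"
    "\<And>w. w \<in> M \<Longrightarrow> cell w = cell v \<Longrightarrow> pos s w \<noteq> H \<Longrightarrow> pay s v \<le> pay s w"
proof -
  note to_head = improvement_only_to_head[OF inv TH stable u]
  define C where "C = {w \<in> M. cell w = cell u \<and> pos s w \<noteq> H}"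
  have "finite C"
    unfolding C_def using finite_subset[OF M_subset finite_units] by simp
  moreover have "u \<in> C"
    unfolding C_def using u(1) to_head(1) by simp
  ultimately obtain v where v: "v \<in> C" and v_min: "\<forall>w\<in>C. pay s v \<le> pay s w"
    using obtains_MIN[of C "pay s"] by (metis Min_le empty_iff finite_imageI imageI)
  have vM: "v \<in> M" and cell_v: "cell v = cell u" and v_H: "pos s v \<noteq> H"
    using v unfolding C_def by auto
  have "H \<in> opts s v"
  proof (cases "v = u")
    case False
    have "valid s" "u \<in> U" "v \<in> U"
      using inv u(1) vM M_subset unfolding invariant_def by auto
    then show ?thesis
      using opts_sibling[OF _ _ _ False cell_v to_head(2)] v_H by blast
  qed (use to_head(2) in simp)
  moreover have "pay s v < V (cell v) H"
    using v_min \<open>u \<in> C\<close> to_head(3) cell_v by fastforce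
  ultimately show thesis
    using that[OF vM v_H] v_min cell_v unfolding C_def by auto
qed

context
  fixes s T H v
  assumes inv: "invariant s T H" and TH: "T \<noteq> H"
    and stable: "\<forall>w\<in>M. pos s w = T \<longrightarrow> tail_stable s w"
    and v: "v \<in> M" "pos s v \<noteq> H" "H \<in> opts s v" "pay s v < V (cell v) H"
    and v_min: "\<And>w. w \<in> M \<Longrightarrow> cell w = cell v \<Longrightarrow> pos s w \<noteq> H \<Longrightarrow> pay s v \<le> pay s w"
begin

lemma W_le_pay_least_paid: "\<forall>q\<in>insert (pos s v) (opts s v). W (cell v) q \<le> pay s v"
  using W_le_pay[OF inv TH v(1,2)] stable v(1) by blast

lemma head_move_satisfied: "\<forall>w\<in>M. satisfied (move s v H) w"
proof (rule satisfied_move[OF _ v(1,3)])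
  show "valid s" "\<forall>w\<in>M - {v}. satisfied s w"
    using inv unfolding invariant_def by auto
  show "\<forall>q\<in>insert (pos s v) (opts s v - {H}). W (cell v) q \<le> V (cell v) H"
    using W_le_pay_least_paid v(4) by fastforce
next
  fix w
  assume w: "w \<in> M" "w \<noteq> v" "cell w = cell v" "0 < L0 (pos s w)"
  have "pay s v \<le> V (cell v) (pos s w)"
  proof (cases "pos s w = H")
    case True
    then show ?thesis
      using v(4) by simp
  next
    case False
    have "valid s" "shifted s T H" "w \<in> U"
      using inv w(1) M_subset unfolding invariant_def by auto
    then have "pay s w \<le> V (cell w) (pos s w)"
      using pay_le_V[OF _ _ TH _ False w(4)] by blast
    then show ?thesis
      using v_min[OF w(1,3) False] w(3) by simp
  qed
  then show "W (cell v) (pos s v) \<le> V (cell v) (pos s w)"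
    using W_le_pay_least_paid by fastforce
qed

lemma head_move_tail_stable: "\<forall>w\<in>M. pos (move s v H) w = T \<longrightarrow> tail_stable (move s v H) w"
proof (intro ballI impI)
  fix w
  assume w: "w \<in> M" "pos (move s v H) w = T"
  have valid: "valid s" and shifted: "shifted s T H"
    using inv unfolding invariant_def by auto
  have vU: "v \<in> U" and wU: "w \<in> U"
    using v(1) w(1) M_subset by auto
  have "w \<noteq> v"
    using w(2) pos_move[OF valid vU v(3) vU] TH by auto
  then have pos_w: "pos s w = T"
    using w(2) pos_move[OF valid vU v(3) wU] by simp
  show "tail_stable (move s v H) w"
  proof (rule tail_stable_move[OF valid vU v(3) wU \<open>w \<noteq> v\<close>])
    show "tail_stable s w"
      using stable w(1) pos_w by blast
    assume cell_w: "cell w = cell v"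
    have "pay s v \<le> pay s w"
      using v_min[OF w(1) cell_w] pos_w TH by simp
    then have "pay s v \<le> W (cell v) T"
      using pay_tail[OF valid shifted TH wU pos_w] cell_w by simp
    then show "W (cell v) (pos s v) \<le> W (cell v) (pos s w)"
      using W_le_pay_least_paid pos_w by fastforce
  qed
qed

end

lemma head_step:
  assumes inv: "invariant s T H" and TH: "T \<noteq> H"
    and stable: "\<forall>w\<in>M. pos s w = T \<longrightarrow> tail_stable s w"
    and u: "u \<in> M" "\<not> br s u"
  obtains s' H' where "improves s s'" "invariant s' T H'" "\<forall>w\<in>M. pos s' w = T \<longrightarrow> tail_stable s' w"
    "H' \<noteq> T \<Longrightarrow> rank_sum V s' < rank_sum V s"
proof -
  obtain v where v: "v \<in> M" "pos s v \<noteq> H" "H \<in> opts s v" "pay s v < V (cell v) H"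
    and v_min: "\<And>w. w \<in> M \<Longrightarrow> cell w = cell v \<Longrightarrow> pos s w \<noteq> H \<Longrightarrow> pay s v \<le> pay s w"
    using least_paid_sibling[OF inv TH stable u] by blast
  have valid: "valid s" and shifted: "shifted s T H" and vU: "v \<in> U"
    using inv v(1) M_subset unfolding invariant_def by auto
  have "rank_sum V (move s v H) < rank_sum V s" if "pos s v \<noteq> T"
    using rank_sum_move_less[OF valid v(1,3)] v(4) pay_other[OF valid shifted TH vU that v(2)]
    by simp
  moreover have "invariant (move s v H) T (pos s v)"
    using valid_move[OF valid vU v(3)] shifted_move_to_head[OF valid vU v(3) shifted]
      head_move_satisfied[OF inv TH stable v v_min] unfolding invariant_def by blast
  ultimately show thesis
    using that[of "move s v H" "pos s v"] improves_move_dev[OF valid vU v(3)] v(4)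
      dev_head[OF valid shifted TH vU] head_move_tail_stable[OF inv TH stable v v_min] by auto
qed

lemma entry_step:
  assumes a: "a \<in> M" "\<not> br s1 a" and others: "\<forall>w\<in>M - {a}. br s1 w"
  obtains s' T H where "improves s1 s'" "invariant s' T H"
proof -
  have aU: "a \<in> U"
    using a(1) M_subset by blast
  have dev_s1: "dev s1 a q = W (cell a) q" for q
    unfolding dev_def W_def ..
  obtain b where b: "b \<in> opts s1 a" "pay s1 a < dev s1 a b" "\<forall>x\<in>opts s1 a. dev s1 a x \<le> dev s1 a b"
    using best_deviation[OF valid_s1 aU a(2)] by blast
  have W_pay: "W (cell a) (pos s1 a) \<le> pay s1 a"
    using W_le_V[OF aU pos_in_resources[OF valid_s1 aU] load_pos_pos[OF valid_s1 aU]]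
    unfolding pay_def V_def .
  have "\<forall>w\<in>M. satisfied (move s1 a b) w"
  proof (rule best_deviation_satisfied[OF valid_s1 a(1) _ b _ W_pay _ b(1)])
    show "\<forall>w\<in>M - {a}. satisfied s1 w"
      using others satisfied_if_br by blast
    show "\<forall>x\<in>opts s1 a. W (cell a) x \<le> dev s1 a x" "W (cell a) (pos s1 a) \<le> W (cell a) b"
      using W_pay b(2) unfolding dev_s1 by simp_all
    show "0 < L0 b \<Longrightarrow> dev s1 a b \<le> V (cell a) b"
      using W_le_V[OF aU] opts_subset_resources[OF valid_s1 aU] b(1) unfolding dev_s1 by blast
  qed
  moreover have "shifted (move s1 a b) b (pos s1 a)"
    using shifted_move_from_tail[OF valid_s1 aU b(1) shifted_initial] by simp
  ultimately show thesis
    using that[of "move s1 a b"] improves_move_dev[OF valid_s1 aU b(1,2)]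
      valid_move[OF valid_s1 aU b(1)] unfolding invariant_def by blast
qed

lemma settles_if_tail_stable:
  "invariant s T H \<Longrightarrow> \<forall>w\<in>M. pos s w = T \<longrightarrow> tail_stable s w \<Longrightarrow> settles s"
proof (induction "rank_sum V s" arbitrary: s H rule: less_induct)
  case less
  show ?case
  proof (cases "T = H \<or> (\<forall>u\<in>M. br s u)")
    case True
    then show ?thesis
      using less.prems(1) settles_if_balanced settles_if_best_responding by blast
  next
    case False
    then obtain u where "T \<noteq> H" "u \<in> M" "\<not> br s u"
      by blast
    then obtain s' H' where s': "improves s s'" "invariant s' T H'"
      "\<forall>w\<in>M. pos s' w = T \<longrightarrow> tail_stable s' w" "H' \<noteq> T \<Longrightarrow> rank_sum V s' < rank_sum V s"
      using head_step[OF less.prems(1) _ less.prems(2)] by metis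
    have "settles s'"
      using less.hyps[OF s'(4) s'(2,3)] settles_if_balanced[of s'] s'(2) by (cases "H' = T") auto
    then show ?thesis
      using settles_step[OF s'(1)] by blast
  qed
qed

lemma settles_if_invariant: "invariant s T H \<Longrightarrow> settles s"
proof (induction "rank_sum W s" arbitrary: s T rule: less_induct)
  case less
  show ?case
  proof (cases "T \<noteq> H \<and> (\<exists>u\<in>M. pos s u = T \<and> \<not> tail_stable s u)")
    case True
    then obtain u where "T \<noteq> H" "u \<in> M" "pos s u = T" "\<not> tail_stable s u"
      by blast
    then obtain s' T' where s': "improves s s'" "invariant s' T' H"
      "T' \<noteq> H \<Longrightarrow> rank_sum W s' < rank_sum W s"
      using tail_step[OF less.prems] by metis
    have "settles s'"
      using less.hyps[OF s'(3) s'(2)] settles_if_balanced s'(2) by (cases "T' = H") auto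
    then show ?thesis
      using settles_step[OF s'(1)] by blast
  next
    case False
    then show ?thesis
      using less.prems settles_if_balanced settles_if_tail_stable by blast
  qed
qed

theorem settles_initial:
  assumes "a \<in> M" "\<forall>w\<in>M - {a}. br s1 w"
  shows "settles s1"
proof (cases "br s1 a")
  case True
  then show ?thesis
    using assms(2) settles_if_best_responding by blast
next
  case False
  then obtain s' T H where "improves s1 s'" "invariant s' T H"
    using entry_step[OF assms(1)] assms(2) by blast
  then show ?thesis
    using settles_if_invariant settles_step by blast
qed

end

section \<open>Cell-units of a search game as a congestion game over slots\<close>

locale cell_unit_game =
  fixes N :: "'i set" and Om :: "'w set" and Pi :: "'i \<Rightarrow> 'w set set"
    and mu :: "'w \<Rightarrow> real" and K :: "'i \<Rightarrow> nat" and c :: "'i \<Rightarrow> nat \<Rightarrow> real"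
    and v :: "'i \<Rightarrow> nat \<Rightarrow> 'w \<Rightarrow> real"
  assumes game: "search_game N Om Pi mu K c v"
begin

abbreviation CU :: "('i \<times> 'w set \<times> nat) set" where "CU \<equiv> cell_units N Pi K"

abbreviation profile :: "('i, 'w) cu_profile \<Rightarrow> bool" where "profile \<equiv> cu_profile N Pi K"

lemma finite_players: "finite N"
  using game unfolding search_game_def by blast

lemma finite_locations: "finite Om"
  using game unfolding search_game_def by blast

lemma cell_subset: "i \<in> N \<Longrightarrow> p \<in> Pi i \<Longrightarrow> p \<subseteq> Om"
  using game unfolding search_game_def by blast

lemma finite_cell: "i \<in> N \<Longrightarrow> p \<in> Pi i \<Longrightarrow> finite p"
  using cell_subset finite_locations finite_subset by blast

lemma cell_unique: "i \<in> N \<Longrightarrow> p \<in> Pi i \<Longrightarrow> p' \<in> Pi i \<Longrightarrow> w \<in> p \<Longrightarrow> w \<in> p' \<Longrightarrow> p' = p"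
  using game unfolding search_game_def by blast

lemma mu_nonneg: "w \<in> Om \<Longrightarrow> 0 \<le> mu w"
  using game unfolding search_game_def by blast

lemma cell_mass_pos: "i \<in> N \<Longrightarrow> p \<in> Pi i \<Longrightarrow> 0 < sum mu p"
  using game unfolding search_game_def by blast

lemma reward_antimono:
  assumes "i \<in> N" "w \<in> Om" "0 < n" "n \<le> m"
  shows "v i m w \<le> v i n w"
proof (rule lift_Suc_antimono_le_ivl[where N = "{1..}"])
  show "v i (Suc k) w \<le> v i k w" if "k \<in> {1..}" for k
    using game assms(1,2) that unfolding search_game_def by auto
qed (use assms in auto)

lemma cost_increment_mono:
  assumes "i \<in> N" "a \<le> b" "b < K i"
  shows "c i (Suc a) - c i a \<le> c i (Suc b) - c i b"
proof (rule lift_Suc_mono_le_ivl[where N = "{k. k + 2 \<le> K i}"])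
  show "c i (Suc k) - c i k \<le> c i (Suc (Suc k)) - c i (Suc k)" if "k \<in> {k. k + 2 \<le> K i}" for k
    using game assms(1) that unfolding search_game_def
    by (auto dest!: bspec[of _ _ i] spec[of _ "Suc k"])
qed (use assms in auto)

lemma cell_units_iff: "(i, p, j) \<in> CU \<longleftrightarrow> i \<in> N \<and> p \<in> Pi i \<and> j \<in> {1..K i}"
  unfolding cell_units_def by simp

lemma finite_cell_units: "finite CU"
proof (rule finite_subset)
  show "CU \<subseteq> (SIGMA i:N. Pi i \<times> {1..K i})"
    unfolding cell_units_def by auto
  have "finite (Pi i)" if "i \<in> N" for i
    using that cell_subset finite_subset[of "Pi i" "Pow Om"] finite_locations by blast
  then show "finite (SIGMA i:N. Pi i \<times> {1..K i})"
    using finite_players by (intro finite_SigmaI) auto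
qed

lemma upd_cu_apply:
  "upd_cu s i p j x i' p' j' = (if i' = i \<and> p' = p \<and> j' = j then x else s i' p' j')"
  unfolding upd_cu_def by simp

lemma upd_cu_other_cell: "(i', p') \<noteq> (i, p) \<Longrightarrow> upd_cu s i p j x i' p' = s i' p'"
  unfolding upd_cu_def by auto

lemma upd_cu_same: "upd_cu s i p j (s i p j) = s"
  unfolding upd_cu_def by simp

lemma profile_in_cell: "profile s \<Longrightarrow> (i, p, j) \<in> CU \<Longrightarrow> s i p j = Some w \<Longrightarrow> w \<in> p"
  unfolding cu_profile_def by blast

lemma profile_distinct:
  "profile s \<Longrightarrow> (i, p, j) \<in> CU \<Longrightarrow> (i, p, j') \<in> CU \<Longrightarrow> j \<noteq> j' \<Longrightarrow> s i p j = Some w \<Longrightarrow> s i p j' \<noteq> Some w"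
  unfolding cu_profile_def by fastforce

lemma profile_upd:
  assumes s: "profile s" and u: "(i, p, j) \<in> CU" and x: "admissible K s i p j x"
  shows "profile (upd_cu s i p j x)"
  unfolding cu_profile_def
proof (intro conjI allI impI)
  fix i' p' j'
  assume "(i', p', j') \<notin> CU"
  then show "upd_cu s i p j x i' p' j' = None"
    using s u unfolding cu_profile_def upd_cu_apply by auto
next
  fix i' p' j' w
  assume "(i', p', j') \<in> CU \<and> upd_cu s i p j x i' p' j' = Some w"
  then show "w \<in> p'"
    using s x unfolding cu_profile_def admissible_def upd_cu_apply by (auto split: if_splits)
next
  fix i' p' j1 j2
  assume "(i', p', j1) \<in> CU \<and> (i', p', j2) \<in> CU \<and> j1 \<noteq> j2 \<and> upd_cu s i p j x i' p' j1 \<noteq> None"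
  then show "upd_cu s i p j x i' p' j1 \<noteq> upd_cu s i p j x i' p' j2"
    using s x unfolding cu_profile_def admissible_def upd_cu_apply cell_units_iff
    by (auto split: if_splits)
qed

fun cell_of :: "'i \<times> 'w set \<times> nat \<Rightarrow> 'i \<times> 'w set" where
  "cell_of (i, p, j) = (i, p)"

fun slots :: "'i \<times> 'w set \<Rightarrow> ('w + 'i \<times> 'w set) set" where
  "slots (i, p) = Inl ` p \<union> {Inr (i, p)}"

fun slot :: "('i, 'w) cu_profile \<Rightarrow> 'i \<times> 'w set \<times> nat \<Rightarrow> 'w + 'i \<times> 'w set" where
  "slot s (i, p, j) = (case s i p j of Some w \<Rightarrow> Inl w | None \<Rightarrow> Inr (i, p))"

fun assignment :: "'w + 'i \<times> 'w set \<Rightarrow> 'w option" where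
  "assignment (Inl w) = Some w"
| "assignment (Inr _) = None"

fun move_unit ::
  "('i, 'w) cu_profile \<Rightarrow> 'i \<times> 'w set \<times> nat \<Rightarrow> 'w + 'i \<times> 'w set \<Rightarrow> ('i, 'w) cu_profile" where
  "move_unit s (i, p, j) r = upd_cu s i p j (assignment r)"

fun free_slots :: "('i, 'w) cu_profile \<Rightarrow> 'i \<times> 'w set \<times> nat \<Rightarrow> ('w + 'i \<times> 'w set) set" where
  "free_slots s (i, p, j) = Inl ` {w \<in> p. \<forall>j'\<in>{1..K i}. s i p j' \<noteq> Some w}
     \<union> (if s i p j = None then {} else {Inr (i, p)})"

definition idle_units :: "('i, 'w) cu_profile \<Rightarrow> 'i \<Rightarrow> 'w set \<Rightarrow> nat set" where
  "idle_units s i p = {j \<in> {1..K i}. s i p j = None}"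

fun slot_load :: "('i, 'w) cu_profile \<Rightarrow> 'w + 'i \<times> 'w set \<Rightarrow> nat" where
  "slot_load s (Inl w) = searchers N Pi K s w"
| "slot_load s (Inr (i, p)) = card (idle_units s i p)"

fun slot_value :: "'i \<times> 'w set \<Rightarrow> 'w + 'i \<times> 'w set \<Rightarrow> nat \<Rightarrow> real" where
  "slot_value (i, p) (Inl w) n = mu w / sum mu p * v i n w"
| "slot_value (i, p) (Inr _) n = c i (K i - n + 1) - c i (K i - n)"
  \<comment> \<open>with n idle units, K i - n are active, so being idle saves this marginal cost\<close>

lemma free_slot_assignment:
  "r \<in> free_slots s (i, p, j) \<Longrightarrow> assignment r = Some w \<Longrightarrow> w \<in> p \<and> (\<forall>j'\<in>{1..K i}. s i p j' \<noteq> Some w)"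
  by (cases r) (auto split: if_splits)

lemma admissible_assignment: "r \<in> free_slots s (i, p, j) \<Longrightarrow> admissible K s i p j (assignment r)"
  unfolding admissible_def by (cases r) (auto split: if_splits)

lemma profile_move_unit: "profile s \<Longrightarrow> u \<in> CU \<Longrightarrow> r \<in> free_slots s u \<Longrightarrow> profile (move_unit s u r)"
  using profile_upd admissible_assignment by (cases u) auto

lemma slot_move_unit:
  assumes "r \<in> free_slots s u"
  shows "slot (move_unit s u r) u' = (if u' = u then r else slot s u')"
  using assms by (cases u; cases u'; cases r) (auto simp: upd_cu_apply split: if_splits)

lemma slot_in_slots: "profile s \<Longrightarrow> u \<in> CU \<Longrightarrow> slot s u \<in> slots (cell_of u)"
  using profile_in_cell by (cases u) (auto split: option.split)

lemma free_slots_subset: "free_slots s u \<subseteq> slots (cell_of u)"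
  by (cases u) auto

lemma slot_notin_free_slots: "u \<in> CU \<Longrightarrow> slot s u \<notin> free_slots s u"
  by (cases u) (auto simp: cell_units_iff split: option.split)

lemma finite_slots: "u \<in> CU \<Longrightarrow> finite (slots (cell_of u))"
  using finite_cell by (cases u) (auto simp: cell_units_iff)

lemma free_slots_move_other_cell:
  "cell_of u' \<noteq> cell_of u \<Longrightarrow> free_slots (move_unit s u r) u' = free_slots s u'"
  by (cases u; cases u') (simp add: upd_cu_other_cell)

lemma free_slots_move_same_cell:
  assumes "cell_of u' = cell_of u"
  shows "free_slots (move_unit s u r) u' \<subseteq> insert (slot s u) (free_slots s u')"
proof
  obtain i p j j' where u: "u = (i, p, j)" and u': "u' = (i, p, j')"
    using assms by (cases u; cases u') auto
  define s' where "s' = move_unit s u r"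
  have s': "s' i p k = (if k = j then assignment r else s i p k)" for k
    unfolding s'_def u by (simp add: upd_cu_apply)
  fix e
  assume e: "e \<in> free_slots (move_unit s u r) u'"
  show "e \<in> insert (slot s u) (free_slots s u')"
  proof (cases e)
    case (Inl w)
    then have w: "w \<in> p" "\<forall>k\<in>{1..K i}. s' i p k \<noteq> Some w"
      using e unfolding u' s'_def by (auto split: if_splits)
    show ?thesis
    proof (cases "s i p j = Some w")
      case True
      then show ?thesis
        unfolding Inl u by simp
    next
      case False
      then have "\<forall>k\<in>{1..K i}. s i p k \<noteq> Some w"
        using w(2) s' by (metis (full_types))
      then show ?thesis
        using w(1) unfolding Inl u' by simp
    qed
  next
    case (Inr e')
    then have "e' = (i, p)" "s' i p j' \<noteq> None"
      using e unfolding u' s'_def by (auto split: if_splits)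
    then show ?thesis
      using s' unfolding Inr u u' by (cases "j' = j") auto
  qed
qed

lemma free_slots_sibling:
  assumes "cell_of u' = cell_of u" "r \<in> free_slots s u"
  shows "r \<in> free_slots s u' \<or> r = slot s u'"
proof -
  obtain i p j j' where u: "u = (i, p, j)" and u': "u' = (i, p, j')"
    using assms(1) by (cases u; cases u') auto
  show ?thesis
    using assms(2) unfolding u u' by (cases r; cases "s i p j'") (auto split: if_splits)
qed

definition other_locations :: "('i, 'w) cu_profile \<Rightarrow> 'i \<Rightarrow> 'w set \<Rightarrow> nat \<Rightarrow> 'w set" where
  "other_locations s i p j = {w. \<exists>j'\<in>{1..K i}. j' \<noteq> j \<and> s i p j' = Some w}"

definition searcher_set :: "('i, 'w) cu_profile \<Rightarrow> 'w \<Rightarrow> 'i set" where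
  "searcher_set s w = {i \<in> N. \<exists>p\<in>Pi i. w \<in> p \<and> w \<in> induced K s i p}"

lemma induced_eq_other_locations:
  assumes "j \<in> {1..K i}"
  shows "induced K s i p = other_locations s i p j \<union> set_option (s i p j)"
proof
  show "induced K s i p \<subseteq> other_locations s i p j \<union> set_option (s i p j)"
  proof
    fix w
    assume "w \<in> induced K s i p"
    then obtain j' where "j' \<in> {1..K i}" "s i p j' = Some w"
      unfolding induced_def by blast
    then show "w \<in> other_locations s i p j \<union> set_option (s i p j)"
      unfolding other_locations_def by (cases "j' = j") auto
  qed
  show "other_locations s i p j \<union> set_option (s i p j) \<subseteq> induced K s i p"
    using assms unfolding induced_def other_locations_def by auto
qed

lemma other_locations_upd: "other_locations (upd_cu s i p j x) i p j = other_locations s i p j"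
  unfolding other_locations_def upd_cu_apply by auto

lemma other_locations_subset:
  assumes s: "profile s" and u: "(i, p, j) \<in> CU"
  shows "other_locations s i p j \<subseteq> p"
proof
  fix w
  assume "w \<in> other_locations s i p j"
  then obtain j' where "j' \<in> {1..K i}" "s i p j' = Some w"
    unfolding other_locations_def by blast
  then show "w \<in> p"
    using profile_in_cell[OF s] u unfolding cell_units_iff by blast
qed

lemma finite_other_locations: "profile s \<Longrightarrow> (i, p, j) \<in> CU \<Longrightarrow> finite (other_locations s i p j)"
  using finite_subset[OF other_locations_subset finite_cell] unfolding cell_units_iff by blast

lemma assigned_notin_other_locations:
  assumes s: "profile s" and u: "(i, p, j) \<in> CU" and "s i p j = Some w"
  shows "w \<notin> other_locations s i p j"
  using profile_distinct[OF s u _ _ assms(3)] u unfolding other_locations_def cell_units_iff by auto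

lemma free_notin_other_locations:
  "r \<in> free_slots s (i, p, j) \<Longrightarrow> assignment r = Some w \<Longrightarrow> w \<notin> other_locations s i p j"
  using free_slot_assignment unfolding other_locations_def by blast

lemma searchers_eq_card: "searchers N Pi K s w = card (searcher_set s w)"
  unfolding searchers_def searcher_set_def ..

lemma searchers_split:
  assumes "i \<in> N" "p \<in> Pi i" "w \<in> p"
  shows "searchers N Pi K s w = card (searcher_set s w - {i}) + of_bool (w \<in> induced K s i p)"
proof -
  have "i \<in> searcher_set s w \<longleftrightarrow> w \<in> induced K s i p"
    unfolding searcher_set_def using assms cell_unique[OF assms(1,2)] by auto
  moreover have "finite (searcher_set s w)"
    unfolding searcher_set_def using finite_players by simp
  ultimately show ?thesis
    unfolding searchers_eq_card using card_eq_card_Diff_singleton_plus[of "searcher_set s w" i]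
    by simp
qed

lemma induced_upd_other_cell:
  "(i', p') \<noteq> (i, p) \<Longrightarrow> induced K (upd_cu s i p j x) i' p' = induced K s i' p'"
  unfolding induced_def using upd_cu_other_cell by metis

lemma searcher_set_upd: "searcher_set (upd_cu s i p j x) w - {i} = searcher_set s w - {i}"
proof -
  have "w \<in> induced K (upd_cu s i p j x) i' p' \<longleftrightarrow> w \<in> induced K s i' p'" if "i' \<noteq> i" for i' p'
    using induced_upd_other_cell[of i' p' i p] that by simp
  then show ?thesis
    unfolding searcher_set_def by blast
qed

lemma searchers_upd_outside:
  assumes "w \<notin> p"
  shows "searchers N Pi K (upd_cu s i p j x) w = searchers N Pi K s w"
proof -
  have "w \<in> p' \<and> w \<in> induced K (upd_cu s i p j x) i' p' \<longleftrightarrow> w \<in> p' \<and> w \<in> induced K s i' p'" for i' p'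
    using induced_upd_other_cell[of i' p' i p] assms by auto
  then show ?thesis
    unfolding searchers_def by simp
qed

lemma searchers_upd_inside:
  assumes "i \<in> N" "p \<in> Pi i" "w \<in> p"
  shows "searchers N Pi K (upd_cu s i p j x) w + of_bool (w \<in> induced K s i p)
       = searchers N Pi K s w + of_bool (w \<in> induced K (upd_cu s i p j x) i p)"
  using searchers_split[OF assms, of s] searchers_split[OF assms, of "upd_cu s i p j x"]
    searcher_set_upd by simp

lemma card_induced_plus_idle:
  assumes s: "profile s" and u: "(i, p, j) \<in> CU"
  shows "card (induced K s i p) + card (idle_units s i p) = K i"
proof -
  define A where "A = {j \<in> {1..K i}. s i p j \<noteq> None}"
  have "inj_on (\<lambda>j. the (s i p j)) A"
  proof (rule inj_onI)
    fix j1 j2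
    assume j: "j1 \<in> A" "j2 \<in> A" "the (s i p j1) = the (s i p j2)"
    then obtain w where "s i p j1 = Some w" "s i p j2 = Some w"
      unfolding A_def by auto
    then show "j1 = j2"
      using profile_distinct[OF s, of i p j1 j2 w] j(1,2) u unfolding A_def cell_units_iff by auto
  qed
  moreover have "induced K s i p = (\<lambda>j. the (s i p j)) ` A"
    unfolding induced_def A_def by (auto intro: rev_image_eqI)
  ultimately have "card (induced K s i p) = card A"
    by (simp add: card_image)
  moreover have "A \<union> idle_units s i p = {1..K i}" "A \<inter> idle_units s i p = {}"
    unfolding A_def idle_units_def by auto
  then have "card A + card (idle_units s i p) = K i"
    using card_Un_disjoint[of A "idle_units s i p"] by (simp add: A_def idle_units_def)
  ultimately show ?thesis
    by simp
qed

lemma induced_move_unit: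
  assumes s: "profile s" and u: "(i, p, j) \<in> CU" and r: "r \<in> free_slots s (i, p, j)"
  shows "of_bool (w \<in> induced K (move_unit s (i, p, j) r) i p) + of_bool (s i p j = Some w)
       = of_bool (w \<in> induced K s i p) + (of_bool (assignment r = Some w) :: nat)"
proof -
  let ?O = "other_locations s i p j" and ?x = "assignment r"
  have jK: "j \<in> {1..K i}"
    using u unfolding cell_units_iff by auto
  have ind: "induced K s i p = ?O \<union> set_option (s i p j)"
    using induced_eq_other_locations[OF jK] .
  have ind': "induced K (move_unit s (i, p, j) r) i p = ?O \<union> set_option ?x"
    using induced_eq_other_locations[OF jK, of "upd_cu s i p j ?x" p] other_locations_upd
    by (simp add: upd_cu_apply)
  show ?thesis
  proof (cases "w \<in> ?O")
    case True
    moreover have "s i p j \<noteq> Some w"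
      using assigned_notin_other_locations[OF s u] True by blast
    moreover have "?x \<noteq> Some w"
      using free_notin_other_locations[OF r] True by blast
    ultimately show ?thesis
      unfolding ind ind' by simp
  next
    case False
    then show ?thesis
      unfolding ind ind' by auto
  qed
qed

lemma slot_load_move_location:
  assumes s: "profile s" and u: "(i, p, j) \<in> CU" and r: "r \<in> free_slots s (i, p, j)"
  shows "slot_load (move_unit s (i, p, j) r) (Inl w) + of_bool (Inl w = slot s (i, p, j))
       = slot_load s (Inl w) + of_bool (Inl w = r)"
proof -
  have i: "i \<in> N" "p \<in> Pi i"
    using u unfolding cell_units_iff by auto
  have slot_eq: "Inl w = slot s (i, p, j) \<longleftrightarrow> s i p j = Some w"
    by (cases "s i p j") auto
  have r_eq: "Inl w = r \<longleftrightarrow> assignment r = Some w"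
    by (cases r) auto
  show ?thesis
  proof (cases "w \<in> p")
    case False
    have "s i p j \<noteq> Some w" "assignment r \<noteq> Some w"
      using False profile_in_cell[OF s u] free_slot_assignment[OF r] by blast+
    then show ?thesis
      using searchers_upd_outside[OF False] slot_eq r_eq by simp
  next
    case True
    then show ?thesis
      using searchers_upd_inside[OF i True, of s j "assignment r"] induced_move_unit[OF s u r, of w]
        slot_eq r_eq by simp
  qed
qed

lemma slot_load_move_idle:
  assumes u: "(i, p, j) \<in> CU" and r: "r \<in> free_slots s (i, p, j)"
  shows "slot_load (move_unit s (i, p, j) r) (Inr e) + of_bool (Inr e = slot s (i, p, j))
       = slot_load s (Inr e) + of_bool (Inr e = r)"
proof -
  define x where "x = assignment r"
  obtain i' p' where e: "e = (i', p')"
    by (cases e) auto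
  have jK: "j \<in> {1..K i}"
    using u unfolding cell_units_iff by auto
  show ?thesis
  proof (cases "e = (i, p)")
    case True
    let ?I = "idle_units (upd_cu s i p j x) i p"
    have "?I - {j} = idle_units s i p - {j}"
      unfolding idle_units_def upd_cu_apply by auto
    moreover have "j \<in> ?I \<longleftrightarrow> x = None" "j \<in> idle_units s i p \<longleftrightarrow> s i p j = None"
      using jK unfolding idle_units_def upd_cu_apply by auto
    moreover have "Inr e = slot s (i, p, j) \<longleftrightarrow> s i p j = None" "Inr e = r \<longleftrightarrow> x = None"
      using r True unfolding x_def by (cases "s i p j"; cases r; auto)+
    ultimately show ?thesis
      using card_eq_card_Diff_singleton_plus[of ?I j]
        card_eq_card_Diff_singleton_plus[of "idle_units s i p" j]
      unfolding True x_def by (simp add: idle_units_def)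
  next
    case False
    have "idle_units (upd_cu s i p j x) i' p' = idle_units s i' p'"
      unfolding idle_units_def using upd_cu_other_cell False e by metis
    moreover have "Inr e \<noteq> slot s (i, p, j)" "Inr e \<noteq> r"
      using r False by (cases "s i p j"; cases r; auto)+
    ultimately show ?thesis
      unfolding e x_def by simp
  qed
qed

lemma slot_load_move:
  assumes "profile s" "u \<in> CU" "r \<in> free_slots s u"
  shows "slot_load (move_unit s u r) e + of_bool (e = slot s u) = slot_load s e + of_bool (e = r)"
  using assms slot_load_move_location slot_load_move_idle by (cases u; cases e) auto

lemma cell_payoff_eq_slot_value:
  assumes s: "profile s" and u: "(i, p, j) \<in> CU"
  shows "cell_payoff N Pi mu K c v s i p =
      (\<Sum>w\<in>other_locations s i p j. mu w / sum mu p * v i (searchers N Pi K s w) w)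
      - c i (Suc (card (other_locations s i p j)))
      + slot_value (i, p) (slot s (i, p, j)) (slot_load s (slot s (i, p, j)))"
proof -
  let ?O = "other_locations s i p j"
  have jK: "j \<in> {1..K i}"
    using u unfolding cell_units_iff by simp
  have fin: "finite ?O"
    using finite_other_locations[OF s u] .
  show ?thesis
  proof (cases "s i p j")
    case None
    then have "induced K s i p = ?O"
      using induced_eq_other_locations[OF jK] by simp
    moreover have "K i - card (idle_units s i p) = card ?O"
      using card_induced_plus_idle[OF s u] calculation by simp
    ultimately show ?thesis
      unfolding cell_payoff_def using None by simp
  next
    case (Some y)
    then have "induced K s i p = insert y ?O" "y \<notin> ?O"
      using induced_eq_other_locations[OF jK] assigned_notin_other_locations[OF s u] by auto
    then show ?thesis
      unfolding cell_payoff_def using Some fin by simp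
  qed
qed

lemma cell_payoff_move_unit:
  assumes s: "profile s" and u: "(i, p, j) \<in> CU" and r: "r \<in> free_slots s (i, p, j)"
  shows "cell_payoff N Pi mu K c v (move_unit s (i, p, j) r) i p = cell_payoff N Pi mu K c v s i p
      + slot_value (i, p) r (Suc (slot_load s r))
      - slot_value (i, p) (slot s (i, p, j)) (slot_load s (slot s (i, p, j)))"
proof -
  define s' where "s' = move_unit s (i, p, j) r"
  let ?O = "other_locations s i p j"
  have i: "i \<in> N" "p \<in> Pi i" and jK: "j \<in> {1..K i}"
    using u unfolding cell_units_iff by auto
  have other: "other_locations s' i p j = ?O"
    unfolding s'_def using other_locations_upd by simp
  have "searchers N Pi K s' w = searchers N Pi K s w" if "w \<in> ?O" for w
  proof -
    have "w \<in> p"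
      using other_locations_subset[OF s u] that by blast
    moreover have "w \<in> induced K s i p" "w \<in> induced K s' i p"
      using that induced_eq_other_locations[OF jK, of s] induced_eq_other_locations[OF jK, of s']
        other
      by auto
    ultimately show ?thesis
      using searchers_upd_inside[OF i, of w s j "assignment r"] unfolding s'_def by simp
  qed
  then have sums: "(\<Sum>w\<in>other_locations s' i p j. mu w / sum mu p * v i (searchers N Pi K s' w) w)
      = (\<Sum>w\<in>?O. mu w / sum mu p * v i (searchers N Pi K s w) w)"
    unfolding other by simp
  have slot': "slot s' (i, p, j) = r"
    unfolding s'_def using slot_move_unit[OF r, of "(i, p, j)"]
    by (simp del: slot.simps move_unit.simps)
  have "r \<noteq> slot s (i, p, j)"
    using slot_notin_free_slots[OF u] r by metis
  then have "slot_load s' r = Suc (slot_load s r)"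
    using slot_load_move[OF s u r, of r] unfolding s'_def
    by (simp del: slot.simps slot_load.simps move_unit.simps)
  then show ?thesis
    using cell_payoff_eq_slot_value[OF profile_move_unit[OF s u r] u]
      cell_payoff_eq_slot_value[OF s u]
      sums slot' other unfolding s'_def by simp
qed

lemma slot_load_pos: "profile s \<Longrightarrow> u \<in> CU \<Longrightarrow> 0 < slot_load s (slot s u)"
proof -
  assume s: "profile s" and u: "u \<in> CU"
  obtain i p j where u_eq: "u = (i, p, j)" and i: "i \<in> N" "p \<in> Pi i" and jK: "j \<in> {1..K i}"
    using u by (cases u) (auto simp: cell_units_iff)
  show ?thesis
  proof (cases "s i p j")
    case None
    then have "j \<in> idle_units s i p"
      using jK unfolding idle_units_def by simp
    then show ?thesis
      unfolding u_eq using None card_gt_0_iff by (fastforce simp: idle_units_def)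
  next
    case (Some w)
    then have "w \<in> p" "w \<in> induced K s i p"
      using profile_in_cell[OF s] u jK unfolding u_eq induced_def by auto
    then show ?thesis
      unfolding u_eq using Some searchers_split[OF i] by simp
  qed
qed

lemma slot_value_antimono:
  assumes u: "u \<in> CU" and r: "r \<in> slots (cell_of u)" and "0 < n" "n \<le> m"
  shows "slot_value (cell_of u) r m \<le> slot_value (cell_of u) r n"
proof -
  obtain i p j where u_eq: "u = (i, p, j)" and i: "i \<in> N" "p \<in> Pi i" and jK: "j \<in> {1..K i}"
    using u by (cases u) (auto simp: cell_units_iff)
  show ?thesis
  proof (cases r)
    case (Inl w)
    then have w: "w \<in> Om"
      using r cell_subset[OF i] unfolding u_eq by auto
    have "v i m w \<le> v i n w"
      using reward_antimono[OF i(1) w assms(3,4)] .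
    then have "mu w * v i m w \<le> mu w * v i n w"
      using mu_nonneg[OF w] by (rule mult_left_mono)
    then show ?thesis
      unfolding u_eq Inl using cell_mass_pos[OF i] by (simp add: divide_right_mono)
  next
    case (Inr e)
    have "c i (Suc (K i - m)) - c i (K i - m) \<le> c i (Suc (K i - n)) - c i (K i - n)"
      using cost_increment_mono[OF i(1), of "K i - m" "K i - n"] assms(3,4) jK by auto
    then show ?thesis
      unfolding u_eq Inr by simp
  qed
qed

lemma free_slot_of_admissible:
  assumes "admissible K s i p j x" "x \<noteq> s i p j"
  obtains r where "r \<in> free_slots s (i, p, j)" "assignment r = x"
proof (cases x)
  case None
  then show thesis
    using assms(2) that[of "Inr (i, p)"] by auto
next
  case (Some w)
  then have "w \<in> p" "\<forall>j'\<in>{1..K i}. s i p j' \<noteq> Some w"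
    using assms unfolding admissible_def by auto
  then show thesis
    using that[of "Inl w"] Some by auto
qed

lemma best_responding_iff_no_better_slot:
  "best_responding N Pi mu K c v s (i, p, j) \<longleftrightarrow> (\<forall>r\<in>free_slots s (i, p, j).
     \<not> cell_payoff N Pi mu K c v s i p < cell_payoff N Pi mu K c v (move_unit s (i, p, j) r) i p)"
  (is "?br \<longleftrightarrow> (\<forall>r\<in>_. \<not> ?P s < ?P (move_unit s (i, p, j) r))")
proof
  assume br: ?br
  show "\<forall>r\<in>free_slots s (i, p, j). \<not> ?P s < ?P (move_unit s (i, p, j) r)"
  proof
    fix r
    assume "r \<in> free_slots s (i, p, j)"
    then show "\<not> ?P s < ?P (move_unit s (i, p, j) r)"
      using br admissible_assignment unfolding best_responding_def move_unit.simps prod.case by blast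
  qed
next
  assume no_better: "\<forall>r\<in>free_slots s (i, p, j). \<not> ?P s < ?P (move_unit s (i, p, j) r)"
  show ?br
    unfolding best_responding_def prod.case
  proof (intro allI impI)
    fix x
    assume x: "admissible K s i p j x"
    show "\<not> ?P s < ?P (upd_cu s i p j x)"
    proof (cases "x = s i p j")
      case True
      then show ?thesis
        using upd_cu_same[of s i p j] by simp
    next
      case False
      then obtain r where "r \<in> free_slots s (i, p, j)" "assignment r = x"
        using free_slot_of_admissible[OF x] by metis
      then show ?thesis
        using no_better unfolding move_unit.simps by blast
    qed
  qed
qed

lemma best_responding_iff:
  assumes s: "profile s" and u: "u \<in> CU"
  shows "best_responding N Pi mu K c v s u \<longleftrightarrow>
    (\<forall>r\<in>free_slots s u. slot_value (cell_of u) r (Suc (slot_load s r))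
        \<le> slot_value (cell_of u) (slot s u) (slot_load s (slot s u)))"
proof -
  obtain i p j where u_eq: "u = (i, p, j)"
    by (cases u) auto
  let ?P = "cell_payoff N Pi mu K c v"
  have "\<not> ?P s i p < ?P (move_unit s (i, p, j) r) i p \<longleftrightarrow>
      slot_value (i, p) r (Suc (slot_load s r)) \<le> slot_value (i, p) (slot s u) (slot_load s (slot s u))"
    if "r \<in> free_slots s (i, p, j)" for r
    unfolding cell_payoff_move_unit[OF s u[unfolded u_eq] that] u_eq by auto
  then show ?thesis
    unfolding best_responding_iff_no_better_slot u_eq cell_of.simps by blast
qed

lemma cu_improvement_move_unit:
  assumes s: "profile s" and u: "u \<in> CU" and r: "r \<in> free_slots s u"
    and gain: "slot_value (cell_of u) (slot s u) (slot_load s (slot s u))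
      < slot_value (cell_of u) r (Suc (slot_load s r))"
  shows "cu_improvement N Pi mu K c v s (move_unit s u r)"
proof -
  obtain i p j where u_eq: "u = (i, p, j)"
    by (cases u) auto
  show ?thesis
    unfolding cu_improvement_def
    using cell_payoff_move_unit[OF s u[unfolded u_eq] r[unfolded u_eq]] gain u
      admissible_assignment r
    unfolding u_eq by fastforce
qed


lemma cell_units_congestion_game:
  "unit_congestion_game CU cell_of slots profile slot slot_load slot_value free_slots move_unit
     (cu_improvement N Pi mu K c v) (best_responding N Pi mu K c v)"
  by unfold_locales
    (rule finite_cell_units finite_slots slot_in_slots free_slots_subset slot_notin_free_slots
      slot_load_pos slot_value_antimono best_responding_iff profile_move_unit
      cu_improvement_move_unit slot_move_unit slot_load_move free_slots_move_other_cell
      free_slots_move_same_cell free_slots_sibling; assumption)+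

end

theorem lemma1:
  fixes N :: "'i set" and Om :: "'w set" and Pi :: "'i \<Rightarrow> 'w set set"
    and mu :: "'w \<Rightarrow> real" and K :: "'i \<Rightarrow> nat" and c :: "'i \<Rightarrow> nat \<Rightarrow> real"
    and v :: "'i \<Rightarrow> nat \<Rightarrow> 'w \<Rightarrow> real"
    and B :: "('i \<times> 'w set \<times> nat) set" and a :: "'i \<times> 'w set \<times> nat"
    and s1 :: "('i, 'w) cu_profile"
  assumes "search_game N Om Pi mu K c v"
    and "B \<subseteq> cell_units N Pi K"
    and "a \<in> cell_units N Pi K"
    and "a \<notin> B"
    and "cu_profile N Pi K s1"
    and "\<forall>b\<in>B. best_responding N Pi mu K c v s1 b"
  shows "\<exists>(T::nat) (seq :: nat \<Rightarrow> ('i, 'w) cu_profile).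
           seq 0 = s1 \<and>
           (\<forall>t<T. cu_improvement N Pi mu K c v (seq t) (seq (Suc t))) \<and>
           (\<forall>b\<in>B \<union> {a}. best_responding N Pi mu K c v (seq T) b)"
proof -
  interpret cell_unit_game N Om Pi mu K c v
    by standard (fact assms(1))
  interpret game: unit_congestion_game_from "cell_units N Pi K" cell_of slots "cu_profile N Pi K"
      slot slot_load slot_value free_slots move_unit "cu_improvement N Pi mu K c v"
      "best_responding N Pi mu K c v" s1 "B \<union> {a}"
    by (intro unit_congestion_game_from.intro cell_units_congestion_game
        unit_congestion_game_from_axioms.intro) (use assms(2,3,5) in auto)
  have "game.settles s1"
    by (rule game.settles_initial[of a]) (use assms(4,6) in auto)
  then obtain s' where "(cu_improvement N Pi mu K c v)\<^sup>*\<^sup>* s1 s'"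
    and "\<forall>b\<in>B \<union> {a}. best_responding N Pi mu K c v s' b"
    unfolding game.settles_def by blast
  then show ?thesis
    by (metis rtranclp_imp_relpowp relpowp_fun_conv)
qed

end
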